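(* Let $n\ge1$ be an integer and $\frac n{n+1}<\beta<1$. Let $E=\{(u_1,\dots,u_n)\in\mathbb{R}^n:|u_i|\le1,\ i=1,\dots,n\}$ and $E^C=\mathbb{R}^n\setminus E$. Then $$I:=\int_{E^C}\frac{1}{|u_1\cdots u_n(u_1+\dots+u_n)|^\beta}\,du_1\cdots du_n<\infty.$$ *)

theory Defs
  imports "HOL-Analysis.Analysis"
begin

definition cubeE :: "(real ^ 'n) set" where
  "cubeE = {u. \<forall>i. \<bar>u $ i\<bar> \<le> 1}"

text \<open>The integrand 1 / |u_1 ... u_n (u_1 + ... + u_n)|^beta, valued in [0, infinity];
  it is infinite where the base vanishes (a Lebesgue-null set).\<close>
definition integrandI :: "real \<Rightarrow> real ^ 'n \<Rightarrow> ennreal" where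
  "integrandI \<beta> u =
     (let p = \<bar>(\<Prod>i\<in>UNIV. u $ i) * (\<Sum>i\<in>UNIV. u $ i)\<bar>
      in if p = 0 then \<infinity> else ennreal (1 / (p powr \<beta>)))"

end

theory Submission
  imports Defs
begin

text \<open>Let \<open>u j\<close> be a coordinate of largest modulus, so \<open>\<bar>u j\<bar> \<ge> 1\<close> off the cube.
  If \<open>\<bar>u j\<bar> \<le> \<bar>\<Sum>i. u i\<bar>\<close>, then \<open>\<bar>\<Sum>i. u i\<bar> powr -\<beta> \<le> \<bar>u j\<bar> powr -\<beta> \<le> (\<Prod>i. max \<bar>u i\<bar> 1 powr (-\<beta>/n))\<close>,
  so the integrand is dominated by the product of the one-variable weights
  \<open>\<bar>t\<bar> powr -\<beta> * max \<bar>t\<bar> 1 powr (-\<beta>/n)\<close>, which are integrable on the line because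
  \<open>\<beta> < 1\<close> (near 0) and \<open>\<beta> + \<beta>/n > 1\<close> (at infinity). Otherwise the shear replacing \<open>u j\<close>
  by \<open>\<Sum>i. u i\<close>, which preserves Lebesgue measure, exchanges the roles of \<open>u j\<close> and
  \<open>\<Sum>i. u i\<close> and leads back to the first case.\<close>

definition inv_powr :: "real \<Rightarrow> real \<Rightarrow> ennreal" where
  "inv_powr b p = (if p = 0 then \<infinity> else ennreal (1 / p powr b))"

lemma integrandI_eq_inv_powr:
  "integrandI \<beta> u = inv_powr \<beta> (\<bar>\<Prod>i\<in>UNIV. u $ i\<bar> * \<bar>\<Sum>i\<in>UNIV. u $ i\<bar>)"
  by (simp add: integrandI_def inv_powr_def abs_mult)

definition powr_weight :: "real \<Rightarrow> real \<Rightarrow> real \<Rightarrow> ennreal" where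
  "powr_weight a c t = (if t = 0 then \<infinity> else ennreal (\<bar>t\<bar> powr (- a) * max \<bar>t\<bar> 1 powr (- c)))"

lemma borel_measurable_powr_weight [measurable]: "powr_weight a c \<in> borel_measurable borel"
  unfolding powr_weight_def by measurable

lemma powr_weight_pos: "0 < powr_weight a c t"
  by (simp add: powr_weight_def)

lemma nn_integral_powr_weight_finite:
  assumes "a < 1" and "1 < a + c"
  shows "(\<integral>\<^sup>+t. powr_weight a c t \<partial>lborel) < \<infinity>"
proof -
  define q where "q s = (if s \<in> {0..1} then s powr (- a) else 0) + (if s \<in> {1..} then s powr (- (a + c)) else 0)"
    for s :: real
  have q_nonneg: "0 \<le> q s" for s
    by (simp add: q_def)
  have q_borel: "q \<in> borel_measurable borel"
    unfolding q_def by measurable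
  have "q integrable_on UNIV"
    unfolding q_def
  proof (intro integrable_add, unfold integrable_restrict_UNIV)
    show "(\<lambda>s. s powr (- a)) integrable_on {0..1}"
      using has_integral_powr_from_0[of "- a" 1] assms(1) by auto
    show "(\<lambda>s. s powr (- (a + c))) integrable_on {1..}"
      using has_integral_powr_to_inf[of "- (a + c)" 1] assms(2) by auto
  qed
  then have q_finite: "(\<integral>\<^sup>+s. q s \<partial>lborel) < \<infinity>"
    using nn_integral_has_integral_lborel[OF q_borel q_nonneg integrable_integral] by simp
  have q_reflect: "(\<integral>\<^sup>+s. q (- s) \<partial>lborel) = (\<integral>\<^sup>+s. q s \<partial>lborel)"
    using nn_integral_real_affine[of "\<lambda>s. ennreal (q s)" "- 1" 0] q_borel by simp
  have weight_le: "powr_weight a c t \<le> ennreal (q t) + ennreal (q (- t))" if "t \<noteq> 0" for t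
  proof -
    have "\<bar>t\<bar> powr (- a) * max \<bar>t\<bar> 1 powr (- c) \<le> q (\<bar>t\<bar>)"
      using that by (auto simp: q_def max_def powr_add[symmetric])
    also have "\<dots> \<le> q t + q (- t)"
      using q_nonneg by (cases "0 \<le> t") auto
    finally show ?thesis
      using that q_nonneg by (simp add: powr_weight_def ennreal_plus[symmetric] del: ennreal_plus)
  qed
  have "(\<integral>\<^sup>+t. powr_weight a c t \<partial>lborel) \<le> (\<integral>\<^sup>+t. ennreal (q t) + ennreal (q (- t)) \<partial>lborel)"
    using AE_lborel_singleton[of 0] by (intro nn_integral_mono_AE) (auto elim!: eventually_mono intro: weight_le)
  also have "\<dots> = 2 * (\<integral>\<^sup>+s. q s \<partial>lborel)"
    using q_borel by (simp add: nn_integral_add q_reflect mult_2)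
  also have "\<dots> < \<infinity>"
    using q_finite by (simp add: ennreal_mult_less_top)
  finally show ?thesis .
qed

lemma Basis_vec_eq_range_axis: "(Basis :: (real^'n) set) = range (\<lambda>i. axis i 1)"
  by (auto simp: Basis_vec_def)

lemma nn_integral_lborel_prod_nth:
  fixes f :: "real \<Rightarrow> ennreal"
  assumes [measurable]: "f \<in> borel_measurable borel"
  shows "(\<integral>\<^sup>+v. (\<Prod>i\<in>UNIV. f ((v :: real^'n) $ i)) \<partial>lborel) = (\<integral>\<^sup>+t. f t \<partial>lborel) ^ CARD('n)"
proof -
  have "(\<Prod>i\<in>UNIV. f (v $ i)) = (\<Prod>b\<in>Basis. f (v \<bullet> b))" for v :: "real^'n"
    by (simp add: Basis_vec_eq_range_axis prod.reindex inj_on_def axis_eq_axis cart_eq_inner_axis)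
  then show ?thesis
    by (simp add: nn_integral_lborel_prod[of "\<lambda>_. f"])
qed

definition prod_weight :: "real \<Rightarrow> real^'n \<Rightarrow> ennreal" where
  "prod_weight b v = (\<Prod>i\<in>UNIV. powr_weight b (b / CARD('n)) (v $ i))"

lemma borel_measurable_prod_weight [measurable]: "prod_weight b \<in> borel_measurable borel"
  unfolding prod_weight_def by measurable

lemma inv_powr_le_prod_weight:
  fixes v :: "real^'n"
  assumes v_le: "\<And>i. \<bar>v $ i\<bar> \<le> \<bar>w\<bar>" and w_ge: "1 \<le> \<bar>w\<bar>" and "0 \<le> b"
  shows "inv_powr b (\<bar>\<Prod>i\<in>UNIV. v $ i\<bar> * \<bar>w\<bar>) \<le> prod_weight b v"
proof (cases "\<exists>i. v $ i = 0")
  case True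
  then obtain i where "v $ i = 0" by blast
  then have "prod_weight b v = \<infinity>"
    using powr_weight_pos[THEN less_imp_neq]
    by (simp add: prod_weight_def prod.remove[of _ i] powr_weight_def prod_zero_iff ennreal_mult_eq_top_iff)
  then show ?thesis by simp
next
  case False
  define n where "n = real CARD('n)"
  have n_pos: "0 < n" by (simp add: n_def)
  have "\<bar>w\<bar> powr (- b) = (\<Prod>i\<in>(UNIV :: 'n set). \<bar>w\<bar> powr (- (b / n)))"
    using w_ge n_pos by (simp add: n_def powr_power)
  also have "\<dots> \<le> (\<Prod>i\<in>UNIV. max \<bar>v $ i\<bar> 1 powr (- (b / n)))"
    using v_le w_ge n_pos \<open>0 \<le> b\<close> by (intro prod_mono) (auto intro!: powr_mono2')
  finally have w_powr_le: "\<bar>w\<bar> powr (- b) \<le> (\<Prod>i\<in>UNIV. max \<bar>v $ i\<bar> 1 powr (- (b / n)))" .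
  have "1 / (\<bar>\<Prod>i\<in>UNIV. v $ i\<bar> * \<bar>w\<bar>) powr b = (\<Prod>i\<in>UNIV. \<bar>v $ i\<bar> powr (- b)) * \<bar>w\<bar> powr (- b)"
    by (simp add: powr_minus_divide powr_mult abs_prod prod_powr_distrib prod_dividef)
  also have "\<dots> \<le> (\<Prod>i\<in>UNIV. \<bar>v $ i\<bar> powr (- b)) * (\<Prod>i\<in>UNIV. max \<bar>v $ i\<bar> 1 powr (- (b / n)))"
    using w_powr_le by (intro mult_left_mono) (auto intro: prod_nonneg)
  also have "\<dots> = (\<Prod>i\<in>UNIV. \<bar>v $ i\<bar> powr (- b) * max \<bar>v $ i\<bar> 1 powr (- (b / n)))"
    by (simp add: prod.distrib)
  finally show ?thesis
    using False w_ge by (auto simp: inv_powr_def prod_weight_def powr_weight_def n_def prod_ennreal intro!: ennreal_leI)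
qed

definition shear :: "'n \<Rightarrow> real^'n \<Rightarrow> real^'n" where
  "shear j u = (\<chi> i. if i = j then (\<Sum>k\<in>UNIV. u $ k) else u $ i)"

lemma borel_measurable_shear [measurable]: "shear j \<in> borel_measurable borel"
  unfolding shear_def
  apply (intro borel_measurable_continuous_onI continuous_on_vec_lambda)
  subgoal for i by (cases "i = j") (auto intro!: continuous_intros)
  done

lemma sum_Basis_scaleR_nth: "(\<Sum>b\<in>Basis. f b *\<^sub>R b :: real^'n) $ i = f (axis i 1)"
  by (simp add: vector_cart[symmetric])

lemma sum_UNIV_axis: "(\<Sum>i\<in>UNIV. f (axis i (1::real)) :: real) = (\<Sum>b\<in>(Basis::(real^'n) set). f b)"
  by (simp add: Basis_vec_eq_range_axis sum.reindex inj_on_def axis_eq_axis)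

lemma shear_sum_Basis:
  "shear j (\<Sum>b\<in>Basis. f b *\<^sub>R b) = (\<Sum>b\<in>Basis. (f(axis j 1 := sum f Basis)) b *\<^sub>R b)"
  unfolding vec_eq_iff shear_def vec_lambda_beta sum_Basis_scaleR_nth sum_UNIV_axis
  by (simp add: axis_eq_axis)

lemma nn_integral_lborel_shear:
  fixes F :: "real^'n \<Rightarrow> ennreal"
  assumes [measurable]: "F \<in> borel_measurable borel"
  shows "(\<integral>\<^sup>+u. F (shear j u) \<partial>lborel) = (\<integral>\<^sup>+u. F u \<partial>lborel)"
proof -
  interpret product_sigma_finite "\<lambda>_::real^'n. lborel::real measure" ..
  \<comment> \<open>In product coordinates the shear translates the \<open>e\<close>-coordinate by the sum of the
    others, so integrating over that coordinate first removes it.\<close>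
  define e :: "real^'n" where "e = axis j 1"
  define I where "I = Basis - {e}"
  define vec where "vec f = (\<Sum>b\<in>Basis. f b *\<^sub>R b :: real^'n)" for f :: "real^'n \<Rightarrow> real"
  have [measurable]: "vec \<in> borel_measurable (\<Pi>\<^sub>M b\<in>Basis. lborel)"
    unfolding vec_def by measurable
  have Basis_eq: "Basis = insert e I" and e_notin: "e \<notin> I" and fin: "finite I"
    by (auto simp: I_def e_def)
  have sum_upd: "sum (x(e := y)) Basis = y + sum x I" for x :: "real^'n \<Rightarrow> real" and y
    using e_notin fin by (auto simp: Basis_eq intro!: sum.cong)
  have "(\<integral>\<^sup>+u. F (shear j u) \<partial>lborel) = (\<integral>\<^sup>+f. F (shear j (vec f)) \<partial>(\<Pi>\<^sub>M b\<in>insert e I. lborel))"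
    by (subst lborel_eq) (simp add: nn_integral_distr vec_def flip: Basis_eq)
  also have "\<dots> = (\<integral>\<^sup>+x. \<integral>\<^sup>+y. F (shear j (vec (x(e := y)))) \<partial>lborel \<partial>(\<Pi>\<^sub>M b\<in>I. lborel))"
    by (rule product_nn_integral_insert) (auto simp: fin e_notin simp flip: Basis_eq)
  also have "\<dots> = (\<integral>\<^sup>+x. \<integral>\<^sup>+y. F (vec (x(e := y + sum x I))) \<partial>lborel \<partial>(\<Pi>\<^sub>M b\<in>I. lborel))"
    by (simp add: vec_def shear_sum_Basis sum_upd del: fun_upd_apply flip: e_def)
  also have "\<dots> = (\<integral>\<^sup>+x. \<integral>\<^sup>+y. F (vec (x(e := y))) \<partial>lborel \<partial>(\<Pi>\<^sub>M b\<in>I. lborel))"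
  proof (rule nn_integral_cong)
    fix x :: "real^'n \<Rightarrow> real"
    have "(\<lambda>y. F (vec (x(e := y)))) \<in> borel_measurable borel"
      unfolding vec_def fun_upd_def by measurable
    from nn_integral_real_affine[OF this, of 1 "sum x I"]
    show "(\<integral>\<^sup>+y. F (vec (x(e := y + sum x I))) \<partial>lborel) = (\<integral>\<^sup>+y. F (vec (x(e := y))) \<partial>lborel)"
      by (simp add: add.commute)
  qed
  also have "\<dots> = (\<integral>\<^sup>+f. F (vec f) \<partial>(\<Pi>\<^sub>M b\<in>insert e I. lborel))"
    by (subst product_nn_integral_insert) (auto simp: fin e_notin Basis_eq[symmetric])
  also have "\<dots> = (\<integral>\<^sup>+u. F u \<partial>lborel)"
    by (subst (2) lborel_eq) (simp add: nn_integral_distr Basis_eq[symmetric] vec_def)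
  finally show ?thesis .
qed

lemma prod_shear_mult: "(\<Prod>i\<in>UNIV. shear j u $ i) * u $ j = (\<Prod>i\<in>UNIV. u $ i) * (\<Sum>i\<in>UNIV. u $ i)"
  by (simp add: shear_def prod.remove[of _ j] ac_simps)

lemma integrandI_le_prod_weight_shear:
  assumes "u \<notin> cubeE" and "0 \<le> \<beta>"
  shows "integrandI \<beta> u \<le> prod_weight \<beta> u + (\<Sum>j\<in>UNIV. prod_weight \<beta> (shear j u))"
proof -
  obtain j where j_max: "\<And>i. \<bar>u $ i\<bar> \<le> \<bar>u $ j\<bar>"
    using Max_in[of "range (\<lambda>i. \<bar>u $ i\<bar>)"] Max_ge[of "range (\<lambda>i. \<bar>u $ i\<bar>)"] by fastforce
  from assms(1) obtain i where "1 < \<bar>u $ i\<bar>"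
    by (auto simp: cubeE_def not_le)
  with j_max have j_ge: "1 \<le> \<bar>u $ j\<bar>"
    by (meson less_imp_le order_trans)
  define s where "s = (\<Sum>i\<in>UNIV. u $ i)"
  show ?thesis
  proof (cases "\<bar>u $ j\<bar> \<le> \<bar>s\<bar>")
    case True
    have "integrandI \<beta> u \<le> prod_weight \<beta> u"
      unfolding integrandI_eq_inv_powr s_def[symmetric]
      using j_max j_ge True assms(2) by (intro inv_powr_le_prod_weight) (auto intro: order_trans)
    then show ?thesis
      by (simp add: add_increasing2)
  next
    case False
    have "integrandI \<beta> u = inv_powr \<beta> (\<bar>\<Prod>i\<in>UNIV. shear j u $ i\<bar> * \<bar>u $ j\<bar>)"
      by (simp add: integrandI_eq_inv_powr prod_shear_mult flip: abs_mult)
    also have "\<dots> \<le> prod_weight \<beta> (shear j u)"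
      using j_max j_ge False assms(2) by (intro inv_powr_le_prod_weight) (auto simp: shear_def s_def)
    also have "\<dots> \<le> (\<Sum>j\<in>UNIV. prod_weight \<beta> (shear j u))"
      by (rule member_le_sum) auto
    finally show ?thesis
      by (simp add: add_increasing)
  qed
qed

theorem lemma5p6:
  fixes \<beta> :: real
  assumes "real CARD('n) / (real CARD('n) + 1) < \<beta>" and "\<beta> < 1"
  shows "(\<integral>\<^sup>+ u \<in> - (cubeE :: (real ^ 'n) set). integrandI \<beta> u \<partial>lborel) < \<infinity>"
proof -
  define n where "n = real CARD('n)"
  have n_pos: "0 < n"
    by (simp add: n_def)
  have \<beta>_pos: "0 < \<beta>"
    using assms(1) n_pos unfolding n_def by (smt (verit) divide_nonneg_pos)
  have "n < \<beta> * (n + 1)"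
    using assms(1) n_pos by (simp add: n_def divide_less_eq add_pos_pos)
  then have tail_exponent: "1 < \<beta> + \<beta> / n"
    using n_pos by (simp add: field_simps)
  have weight_finite: "(\<integral>\<^sup>+v. prod_weight \<beta> (v :: real^'n) \<partial>lborel) < \<infinity>"
    using nn_integral_powr_weight_finite[OF assms(2) tail_exponent]
    by (simp add: prod_weight_def nn_integral_lborel_prod_nth n_def power_less_top_ennreal)
  have "(\<integral>\<^sup>+ u \<in> - (cubeE :: (real ^ 'n) set). integrandI \<beta> u \<partial>lborel)
      \<le> (\<integral>\<^sup>+u. prod_weight \<beta> (u :: real^'n) + (\<Sum>j\<in>UNIV. prod_weight \<beta> (shear j u)) \<partial>lborel)"
    by (rule nn_integral_mono) (use \<beta>_pos in \<open>auto simp: indicator_def integrandI_le_prod_weight_shear\<close>)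
  also have "\<dots> = (1 + of_nat CARD('n)) * (\<integral>\<^sup>+v. prod_weight \<beta> (v :: real^'n) \<partial>lborel)"
    by (simp add: nn_integral_add nn_integral_sum nn_integral_lborel_shear distrib_right)
  also have "\<dots> < \<infinity>"
    using weight_finite by (simp add: ennreal_mult_less_top of_nat_less_top)
  finally show ?thesis .
qed

end
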